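(* Let $(L,\{\cdot,\cdot,\cdot\},\alpha)$ be a 3-Hom-pre-Lie algebra. Then $(L,[\cdot,\cdot,\cdot]_C,\alpha)$, where $[x,y,z]_C=\{x,y,z\}+\{y,z,x\}+\{z,x,y\}$, is a 3-Hom-Lie algebra.
   Context: A 3-Hom-Lie algebra is a triple $(L,[\cdot,\cdot,\cdot],\alpha)$ with $[\cdot,\cdot,\cdot]:\wedge^3L\to L$ skew-symmetric trilinear and $\alpha:L\to L$ linear satisfying $[\alpha(x),\alpha(y),[u,v,w]]=[[x,y,u],\alpha(v),\alpha(w)]+[\alpha(u),[x,y,v],\alpha(w)]+[\alpha(u),\alpha(v),[x,y,w]]$ for all $x,y,u,v,w\in L$. A 3-Hom-pre-Lie algebra is a triple $(L,\{\cdot,\cdot,\cdot\},\alpha)$ with $\{\cdot,\cdot,\cdot\}:L\otimes L\otimes L\to L$ trilinear and $\alpha:L\to L$ linear such that, with $[x,y,z]_C=\{x,y,z\}+\{y,z,x\}+\{z,x,y\}$, for all $x,y,z,u,v\in L$: $\{x,y,z\}=-\{y,x,z\}$; $\{\alpha(x),\alpha(y),\{z,u,v\}\}=\{[x,y,z]_C,\alpha(u),\alpha(v)\}+\{\alpha(z),[x,y,u]_C,\alpha(v)\}+\{\alpha(z),\alpha(u),\{x,y,v\}\}$; $\{[x,y,z]_C,\alpha(u),\alpha(v)\}=\{\alpha(x),\alpha(y),\{z,u,v\}\}+\{\alpha(y),\alpha(z),\{x,u,v\}\}+\{\alpha(z),\alpha(x),\{y,u,v\}\}$. *)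

theory Defs
  imports Main "HOL.Vector_Spaces"
begin

definition trilinear :: "('k::field \<Rightarrow> 'a::ab_group_add \<Rightarrow> 'a) \<Rightarrow> ('a \<Rightarrow> 'a \<Rightarrow> 'a \<Rightarrow> 'a) \<Rightarrow> bool" where
  "trilinear scale m \<longleftrightarrow>
     (\<forall>y z. Vector_Spaces.linear scale scale (\<lambda>x. m x y z)) \<and>
     (\<forall>x z. Vector_Spaces.linear scale scale (\<lambda>y. m x y z)) \<and>
     (\<forall>x y. Vector_Spaces.linear scale scale (\<lambda>z. m x y z))"

definition skew_symmetric3 :: "('a::ab_group_add \<Rightarrow> 'a \<Rightarrow> 'a \<Rightarrow> 'a) \<Rightarrow> bool" where
  "skew_symmetric3 m \<longleftrightarrow>
     (\<forall>x y z. m x y z = - m y x z) \<and>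
     (\<forall>x y z. m x y z = - m x z y) \<and>
     (\<forall>x y z. m x y z = - m z y x)"

definition hom_lie3 :: "('k::field \<Rightarrow> 'a::ab_group_add \<Rightarrow> 'a) \<Rightarrow> ('a \<Rightarrow> 'a \<Rightarrow> 'a \<Rightarrow> 'a) \<Rightarrow> ('a \<Rightarrow> 'a) \<Rightarrow> bool" where
  "hom_lie3 scale br \<alpha> \<longleftrightarrow>
     vector_space scale \<and> trilinear scale br \<and> skew_symmetric3 br \<and> Vector_Spaces.linear scale scale \<alpha> \<and>
     (\<forall>x y u v w. br (\<alpha> x) (\<alpha> y) (br u v w) =
        br (br x y u) (\<alpha> v) (\<alpha> w) + br (\<alpha> u) (br x y v) (\<alpha> w) + br (\<alpha> u) (\<alpha> v) (br x y w))"

definition comm3 :: "('a::ab_group_add \<Rightarrow> 'a \<Rightarrow> 'a \<Rightarrow> 'a) \<Rightarrow> 'a \<Rightarrow> 'a \<Rightarrow> 'a \<Rightarrow> 'a" where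
  "comm3 m x y z = m x y z + m y z x + m z x y"

definition hom_pre_lie3 :: "('k::field \<Rightarrow> 'a::ab_group_add \<Rightarrow> 'a) \<Rightarrow> ('a \<Rightarrow> 'a \<Rightarrow> 'a \<Rightarrow> 'a) \<Rightarrow> ('a \<Rightarrow> 'a) \<Rightarrow> bool" where
  "hom_pre_lie3 scale m \<alpha> \<longleftrightarrow>
     vector_space scale \<and> trilinear scale m \<and> Vector_Spaces.linear scale scale \<alpha> \<and>
     (\<forall>x y z. m x y z = - m y x z) \<and>
     (\<forall>x y z u v. m (\<alpha> x) (\<alpha> y) (m z u v) =
        m (comm3 m x y z) (\<alpha> u) (\<alpha> v) + m (\<alpha> z) (comm3 m x y u) (\<alpha> v) + m (\<alpha> z) (\<alpha> u) (m x y v)) \<and>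
     (\<forall>x y z u v. m (comm3 m x y z) (\<alpha> u) (\<alpha> v) =
        m (\<alpha> x) (\<alpha> y) (m z u v) + m (\<alpha> y) (\<alpha> z) (m x u v) + m (\<alpha> z) (\<alpha> x) (m y u v))"

end

theory Submission
  imports Defs
begin

text \<open>
  Write \<open>[x,y,z]\<close> for \<open>comm3 m x y z\<close>. For \<open>c = [u,v,w]\<close> the outer bracket
  \<open>[\<alpha> x, \<alpha> y, c]\<close> splits into \<open>m (\<alpha> x) (\<alpha> y) c\<close> and the part
  \<open>m c (\<alpha> x) (\<alpha> y) - m c (\<alpha> y) (\<alpha> x)\<close> that is antisymmetric in \<open>x, y\<close>.
  The first pre-Lie axiom, applied to the three cyclic summands of \<open>c\<close>, turns the
  former into the right-hand side of the fundamental identity up to the correction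
  terms \<open>m (\<alpha> v) (\<alpha> w) ([x,y,u] - m x y u)\<close> and their cyclic analogues; the
  second axiom, applied twice to the antisymmetric part, produces exactly these
  corrections.
\<close>

lemma linear_self_additive:
  assumes "Vector_Spaces.linear s s f"
  shows "f (a + b) = f a + f b" and "f (a - b) = f a - f b" and "f (- a) = - f a"
  using assms unfolding linear_iff_module_hom
  by (simp_all add: module_hom.add module_hom.diff module_hom.neg)

lemma linear_self_add_fun:
  assumes "Vector_Spaces.linear s s f" and "Vector_Spaces.linear s s g"
  shows "Vector_Spaces.linear s s (\<lambda>x. f x + g x)"
proof -
  have "vector_space_pair s s"
    using assms(1) by (simp add: linear_iff vector_space_pair_def)
  then show ?thesis
    using assms by (rule vector_space_pair.linear_compose_add)
qed

lemma trilinear_comm3: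
  assumes "trilinear s m"
  shows "trilinear s (comm3 m)"
proof -
  have l1: "\<And>y z. Vector_Spaces.linear s s (\<lambda>x. m x y z)"
    and l2: "\<And>x z. Vector_Spaces.linear s s (\<lambda>y. m x y z)"
    and l3: "\<And>x y. Vector_Spaces.linear s s (\<lambda>z. m x y z)"
    using assms unfolding trilinear_def by blast+
  show ?thesis
    unfolding trilinear_def comm3_def
    by (intro conjI allI linear_self_add_fun l1 l2 l3)
qed

lemma skew_symmetric3_comm3:
  assumes skew: "\<And>x y z. m x y z = - m y x z"
  shows "skew_symmetric3 (comm3 m)"
proof -
  have cyclic: "comm3 m x y z = comm3 m y z x" for x y z
    by (simp add: comm3_def ac_simps)
  have swap12: "comm3 m x y z = - comm3 m y x z" for x y z
    unfolding comm3_def skew[of y x z] skew[of x z y] skew[of z y x] by simp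
  show ?thesis
    unfolding skew_symmetric3_def using swap12 cyclic by metis
qed

context
  fixes scale :: "'k::field \<Rightarrow> 'a::ab_group_add \<Rightarrow> 'a"
    and m :: "'a \<Rightarrow> 'a \<Rightarrow> 'a \<Rightarrow> 'a" and \<alpha> :: "'a \<Rightarrow> 'a"
  assumes pre_lie: "hom_pre_lie3 scale m \<alpha>"
begin

lemma mult_additive:
  shows "m (a + b) c d = m a c d + m b c d" and "m (a - b) c d = m a c d - m b c d"
    and "m (- a) c d = - m a c d"
    and "m c (a + b) d = m c a d + m c b d" and "m c (a - b) d = m c a d - m c b d"
    and "m c (- a) d = - m c a d"
    and "m c d (a + b) = m c d a + m c d b" and "m c d (a - b) = m c d a - m c d b"
    and "m c d (- a) = - m c d a"
  using pre_lie
  unfolding hom_pre_lie3_def trilinear_def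
  by (meson linear_self_additive)+

lemma mult_skew: "m x y z = - m y x z"
  using pre_lie unfolding hom_pre_lie3_def by blast

lemma mult_mult_expand:
  "m (\<alpha> x) (\<alpha> y) (m z u v) =
     m (comm3 m x y z) (\<alpha> u) (\<alpha> v) + m (\<alpha> z) (comm3 m x y u) (\<alpha> v) + m (\<alpha> z) (\<alpha> u) (m x y v)"
  using pre_lie unfolding hom_pre_lie3_def by blast

lemma mult_comm3_expand:
  "m (comm3 m x y z) (\<alpha> u) (\<alpha> v) =
     m (\<alpha> x) (\<alpha> y) (m z u v) + m (\<alpha> y) (\<alpha> z) (m x u v) + m (\<alpha> z) (\<alpha> x) (m y u v)"
  using pre_lie unfolding hom_pre_lie3_def by blast

lemma mult_alpha_comm3:
  "m (\<alpha> x) (\<alpha> y) (comm3 m u v w) =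
     comm3 m (comm3 m x y u) (\<alpha> v) (\<alpha> w) + comm3 m (\<alpha> u) (comm3 m x y v) (\<alpha> w)
       + comm3 m (\<alpha> u) (\<alpha> v) (comm3 m x y w)
     - (m (\<alpha> v) (\<alpha> w) (comm3 m x y u - m x y u) + m (\<alpha> w) (\<alpha> u) (comm3 m x y v - m x y v)
       + m (\<alpha> u) (\<alpha> v) (comm3 m x y w - m x y w))"
  (is "_ = ?rhs")
proof -
  have "m (\<alpha> x) (\<alpha> y) (comm3 m u v w) =
      m (\<alpha> x) (\<alpha> y) (m u v w) + m (\<alpha> x) (\<alpha> y) (m v w u) + m (\<alpha> x) (\<alpha> y) (m w u v)"
    by (simp add: comm3_def mult_additive)
  also have "\<dots> =
      m (comm3 m x y u) (\<alpha> v) (\<alpha> w) + m (\<alpha> u) (comm3 m x y v) (\<alpha> w) + m (\<alpha> u) (\<alpha> v) (m x y w)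
    + m (comm3 m x y v) (\<alpha> w) (\<alpha> u) + m (\<alpha> v) (comm3 m x y w) (\<alpha> u) + m (\<alpha> v) (\<alpha> w) (m x y u)
    + m (comm3 m x y w) (\<alpha> u) (\<alpha> v) + m (\<alpha> w) (comm3 m x y u) (\<alpha> v) + m (\<alpha> w) (\<alpha> u) (m x y v)"
    unfolding mult_mult_expand[of x y u v w] mult_mult_expand[of x y v w u]
      mult_mult_expand[of x y w u v]
    by (simp only: add.assoc)
  also have "\<dots> = ?rhs"
    unfolding comm3_def[of m "comm3 m x y u"] comm3_def[of m "\<alpha> u" "comm3 m x y v"]
      comm3_def[of m "\<alpha> u" "\<alpha> v" "comm3 m x y w"]
    by (simp add: mult_additive algebra_simps)
  finally show ?thesis .
qed

lemma mult_comm3_alpha_antisym: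
  "m (comm3 m u v w) (\<alpha> x) (\<alpha> y) + m (\<alpha> y) (comm3 m u v w) (\<alpha> x) =
     m (\<alpha> v) (\<alpha> w) (comm3 m x y u - m x y u) + m (\<alpha> w) (\<alpha> u) (comm3 m x y v - m x y v)
       + m (\<alpha> u) (\<alpha> v) (comm3 m x y w - m x y w)"
proof -
  have "m (comm3 m u v w) (\<alpha> x) (\<alpha> y) + m (\<alpha> y) (comm3 m u v w) (\<alpha> x) =
      m (comm3 m u v w) (\<alpha> x) (\<alpha> y) - m (comm3 m u v w) (\<alpha> y) (\<alpha> x)"
    by (simp add: mult_skew[of "\<alpha> y"])
  also have "\<dots> =
      m (\<alpha> u) (\<alpha> v) (m w x y) + m (\<alpha> v) (\<alpha> w) (m u x y) + m (\<alpha> w) (\<alpha> u) (m v x y)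
    - (m (\<alpha> u) (\<alpha> v) (m w y x) + m (\<alpha> v) (\<alpha> w) (m u y x) + m (\<alpha> w) (\<alpha> u) (m v y x))"
    by (simp only: mult_comm3_expand)
  also have "\<dots> =
      m (\<alpha> v) (\<alpha> w) (comm3 m x y u - m x y u) + m (\<alpha> w) (\<alpha> u) (comm3 m x y v - m x y v)
    + m (\<alpha> u) (\<alpha> v) (comm3 m x y w - m x y w)"
    by (simp add: comm3_def mult_additive mult_skew[of w y] mult_skew[of u y] mult_skew[of v y]
        algebra_simps)
  finally show ?thesis .
qed

lemma comm3_fundamental_identity:
  "comm3 m (\<alpha> x) (\<alpha> y) (comm3 m u v w) =
     comm3 m (comm3 m x y u) (\<alpha> v) (\<alpha> w) + comm3 m (\<alpha> u) (comm3 m x y v) (\<alpha> w)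
       + comm3 m (\<alpha> u) (\<alpha> v) (comm3 m x y w)"
proof -
  have "comm3 m (\<alpha> x) (\<alpha> y) (comm3 m u v w) = m (\<alpha> x) (\<alpha> y) (comm3 m u v w)
      + (m (comm3 m u v w) (\<alpha> x) (\<alpha> y) + m (\<alpha> y) (comm3 m u v w) (\<alpha> x))"
    by (simp add: comm3_def[of m "\<alpha> x"] ac_simps)
  then show ?thesis
    unfolding mult_alpha_comm3 mult_comm3_alpha_antisym by simp
qed

end

theorem proposition3p4:
  fixes scale :: "'k::field \<Rightarrow> 'a::ab_group_add \<Rightarrow> 'a"
    and m :: "'a \<Rightarrow> 'a \<Rightarrow> 'a \<Rightarrow> 'a" and \<alpha> :: "'a \<Rightarrow> 'a"
  assumes "hom_pre_lie3 scale m \<alpha>"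
  shows "hom_lie3 scale (comm3 m) \<alpha>"
proof -
  have "vector_space scale" and "trilinear scale m" and "Vector_Spaces.linear scale scale \<alpha>"
    using assms unfolding hom_pre_lie3_def by blast+
  then show ?thesis
    unfolding hom_lie3_def
    using trilinear_comm3 skew_symmetric3_comm3[of m, OF mult_skew[OF assms]]
      comm3_fundamental_identity[OF assms]
    by blast
qed

end
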